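(* Suppose the designer is accuracy aligned ($A_1\ge A_0$ and $B_1\ge B_0$) and $\phi<1$. Then there exist $L\in(0,1)$ and $U\in(0,1)$, depending only on $(A_1,A_0,B_1,B_0,\phi)$, such that for every type distribution $F$ satisfying the assumptions below with $F(0)<L$ or $F(0)>U$, a null equilibrium exists.
   Context: A unit mass of individuals has costs $\gamma_i\in\mathbb{R}$ of compliance ($\beta_i=1$) distributed according to a continuously differentiable CDF $F$ with log-concave density $f$ of full support on $\mathbb{R}$. A classifier $\delta=(\delta_1,\delta_0)\in[0,1]^2$ assigns $d_i$ with $\Pr[d_i=s_i\mid s_i]=\delta_{s_i}$ where $\Pr[s_i=\beta_i]=\phi\in(\tfrac12,1]$; individuals with $d_i=1$ receive reward $r\in\mathbb{R}$. Let $\rho(\delta)=(\delta_1+\delta_0-1)(2\phi-1)$; $\delta$ is null iff $\rho=0$. Individuals comply iff $\gamma_i\le r\rho$; compliance rate $\pi=F(r\rho)$. Designer payoffs $(A_1,A_0,B_1,B_0)\in\mathbb{R}_+^4$ ($A_1$: complier with $d_i=1$; $A_0$: complier with $d_i=0$; $B_1$: non-complier with $d_i=0$; $B_0$: non-complier with $d_i=1$), expected payoff $EU_D(\delta\mid r)=\pi[\phi(A_1\delta_1+A_0(1-\delta_1))+(1-\phi)(A_0\delta_0+A_1(1-\delta_0))]+(1-\pi)[\phi(B_1\delta_0+B_0(1-\delta_0))+(1-\phi)(B_0\delta_1+B_1(1-\delta_1))]$. Rewards are budget balanced and each individual also gets $t\pi$, $t\ge0$; individual $i$'s payoff from $r$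 given $\delta$ is $U_i(r)=-\gamma_i+r\rho(1-F(r\rho))+tF(r\rho)$ if $\gamma_i\le r\rho$, else $-r\rho F(r\rho)+tF(r\rho)$. The median individual has cost $\gamma_\mu$ with $F(\gamma_\mu)=\tfrac12$. An equilibrium is a pair $(r^*,\delta^* )$ such that $r^*$ maximizes $U_\mu(r)$ given $\delta^*$ and $\delta^*$ maximizes $EU_D(\delta\mid r^* )$ over $[0,1]^2$; a null equilibrium is one with $r^*=0$ and/or $\delta^*$ null. *)

theory Defs
  imports "HOL-Analysis.Analysis"
begin

definition rho :: "real \<Rightarrow> real \<Rightarrow> real \<Rightarrow> real" where
  "rho phi d1 d0 = (d1 + d0 - 1) * (2 * phi - 1)"

text \<open>Designer's expected payoff EU_D(delta | r), with compliance rate pi = F(r rho).\<close>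
definition EUD :: "(real \<Rightarrow> real) \<Rightarrow> real \<Rightarrow> real \<Rightarrow> real \<Rightarrow> real \<Rightarrow> real
    \<Rightarrow> real \<Rightarrow> real \<Rightarrow> real \<Rightarrow> real" where
  "EUD F A1 A0 B1 B0 phi r d1 d0 =
     (let p = F (r * rho phi d1 d0) in
        p * (phi * (A1 * d1 + A0 * (1 - d1)) + (1 - phi) * (A0 * d0 + A1 * (1 - d0)))
      + (1 - p) * (phi * (B1 * d0 + B0 * (1 - d0)) + (1 - phi) * (B0 * d1 + B1 * (1 - d1))))"

definition Uind :: "(real \<Rightarrow> real) \<Rightarrow> real \<Rightarrow> real \<Rightarrow> real \<Rightarrow> real \<Rightarrow> real \<Rightarrow> real \<Rightarrow> real" where
  "Uind F t phi g d1 d0 r =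
     (let x = r * rho phi d1 d0 in
        if g \<le> x then - g + x * (1 - F x) + t * F x
        else - x * F x + t * F x)"

text \<open>Equilibrium: r maximizes the median individual's payoff given delta (over all real r),
  and delta maximizes the designer's payoff given r over [0,1]^2.\<close>
definition is_equilibrium :: "(real \<Rightarrow> real) \<Rightarrow> real \<Rightarrow> real \<Rightarrow> real \<Rightarrow> real \<Rightarrow> real \<Rightarrow> real
    \<Rightarrow> real \<Rightarrow> real \<Rightarrow> real \<Rightarrow> real \<Rightarrow> bool" where
  "is_equilibrium F t gmu A1 A0 B1 B0 phi r d1 d0 \<longleftrightarrow>
     d1 \<in> {0..1} \<and> d0 \<in> {0..1} \<and>
     (\<forall>r'. Uind F t phi gmu d1 d0 r' \<le> Uind F t phi gmu d1 d0 r) \<and>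
     (\<forall>e1\<in>{0..1}. \<forall>e0\<in>{0..1}. EUD F A1 A0 B1 B0 phi r e1 e0 \<le> EUD F A1 A0 B1 B0 phi r d1 d0)"

definition null_equilibrium :: "(real \<Rightarrow> real) \<Rightarrow> real \<Rightarrow> real \<Rightarrow> real \<Rightarrow> real \<Rightarrow> real \<Rightarrow> real
    \<Rightarrow> real \<Rightarrow> real \<Rightarrow> real \<Rightarrow> real \<Rightarrow> bool" where
  "null_equilibrium F t gmu A1 A0 B1 B0 phi r d1 d0 \<longleftrightarrow>
     is_equilibrium F t gmu A1 A0 B1 B0 phi r d1 d0 \<and> (r = 0 \<or> rho phi d1 d0 = 0)"

definition admissible_cdf :: "(real \<Rightarrow> real) \<Rightarrow> (real \<Rightarrow> real) \<Rightarrow> bool" where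
  "admissible_cdf F f \<longleftrightarrow>
     mono F \<and> (F \<longlongrightarrow> 0) at_bot \<and> (F \<longlongrightarrow> 1) at_top \<and>
     (\<forall>x. (F has_real_derivative f x) (at x)) \<and> continuous_on UNIV f \<and>
     (\<forall>x. 0 < f x) \<and> concave_on UNIV (\<lambda>x. ln (f x))"

end

theory Submission
  imports Defs
begin

text \<open>At reward 0 the compliance rate is the constant F(0), so the designer's payoff is affine
  in the classifier (d1, d0), with slopes EUD_slope1, EUD_slope0 whose sum (2 phi - 1)(F(0)(A1 - A0) + (1 - F(0))(B1 - B0))
  is nonnegative under accuracy alignment. Unless both slopes are positive, one of the corners
  (1,0), (0,1) is optimal; both are null, and against a null classifier the median individual
  is indifferent to the reward, so reward 0 together with that corner is a null equilibrium.
  Both slopes are positive only for F(0) in an interval (L, U) determined by the payoffs and phi.\<close>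

lemma admissible_cdf_range:
  assumes "admissible_cdf F f"
  shows "0 \<le> F x" "F x \<le> 1"
proof -
  have mono: "mono F" and lim0: "(F \<longlongrightarrow> 0) at_bot" and lim1: "(F \<longlongrightarrow> 1) at_top"
    using assms unfolding admissible_cdf_def by auto
  have "eventually (\<lambda>y. F y \<le> F x) at_bot"
    using mono by (auto simp: eventually_at_bot_linorder mono_def)
  then show "0 \<le> F x"
    using tendsto_upperbound[OF lim0] by auto
  have "eventually (\<lambda>y. F x \<le> F y) at_top"
    using mono by (auto simp: eventually_at_top_linorder mono_def)
  then show "F x \<le> 1"
    using tendsto_lowerbound[OF lim1] by auto
qed

definition EUD_slope1 :: "real \<Rightarrow> real \<Rightarrow> real \<Rightarrow> real \<Rightarrow> real \<Rightarrow> real \<Rightarrow> real" where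
  "EUD_slope1 q A1 A0 B1 B0 phi = q * phi * (A1 - A0) - (1 - q) * (1 - phi) * (B1 - B0)"

definition EUD_slope0 :: "real \<Rightarrow> real \<Rightarrow> real \<Rightarrow> real \<Rightarrow> real \<Rightarrow> real \<Rightarrow> real" where
  "EUD_slope0 q A1 A0 B1 B0 phi = (1 - q) * phi * (B1 - B0) - q * (1 - phi) * (A1 - A0)"

lemma EUD_zero_reward:
  "EUD F A1 A0 B1 B0 phi 0 e1 e0 = EUD F A1 A0 B1 B0 phi 0 0 0
     + EUD_slope1 (F 0) A1 A0 B1 B0 phi * e1 + EUD_slope0 (F 0) A1 A0 B1 B0 phi * e0"
  unfolding EUD_def EUD_slope1_def EUD_slope0_def Let_def by (simp add: algebra_simps)

lemma EUD_slopes_sum_nonneg: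
  assumes "A0 \<le> A1" "B0 \<le> B1" "1/2 \<le> phi" "0 \<le> q" "q \<le> 1"
  shows "0 \<le> EUD_slope1 q A1 A0 B1 B0 phi + EUD_slope0 q A1 A0 B1 B0 phi"
proof -
  have "EUD_slope1 q A1 A0 B1 B0 phi + EUD_slope0 q A1 A0 B1 B0 phi
          = (2 * phi - 1) * (q * (A1 - A0) + (1 - q) * (B1 - B0))"
    unfolding EUD_slope1_def EUD_slope0_def by (simp add: algebra_simps)
  then show ?thesis
    using assms by simp
qed

lemma linear_max_on_unit_square_at_antidiagonal_corner:
  fixes c1 c0 :: real
  assumes "0 \<le> c1 + c0" "\<not> (0 < c1 \<and> 0 < c0)"
  obtains d1 d0 where "d1 \<in> {0..1}" "d0 \<in> {0..1}" "d1 + d0 = 1"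
    "\<forall>e1\<in>{0..1}. \<forall>e0\<in>{0..1}. c1 * e1 + c0 * e0 \<le> c1 * d1 + c0 * d0"
proof (cases "0 < c1")
  case True
  then have "c0 \<le> 0"
    using assms(2) by linarith
  have "c1 * e1 + c0 * e0 \<le> c1 * 1 + c0 * 0" if "e1 \<in> {0..1}" "e0 \<in> {0..1}" for e1 e0
  proof -
    have "c1 * e1 \<le> c1"
      using mult_left_le[of e1 c1] that True by simp
    moreover have "c0 * e0 \<le> 0"
      using mult_nonpos_nonneg[of c0 e0] that \<open>c0 \<le> 0\<close> by simp
    ultimately show ?thesis
      by simp
  qed
  then show ?thesis
    using that[of 1 0] by simp
next
  case False
  then have "0 \<le> c0"
    using assms(1) by linarith
  have "c1 * e1 + c0 * e0 \<le> c1 * 0 + c0 * 1" if "e1 \<in> {0..1}" "e0 \<in> {0..1}" for e1 e0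
  proof -
    have "c0 * e0 \<le> c0"
      using mult_left_le[of e0 c0] that \<open>0 \<le> c0\<close> by simp
    moreover have "c1 * e1 \<le> 0"
      using mult_nonpos_nonneg[of c1 e1] that False by simp
    ultimately show ?thesis
      by simp
  qed
  then show ?thesis
    using that[of 0 1] by simp
qed

lemma Uind_rho_zero: "rho phi d1 d0 = 0 \<Longrightarrow> Uind F t phi g d1 d0 r = Uind F t phi g d1 d0 r'"
  unfolding Uind_def Let_def by simp

lemma null_equilibrium_zero_reward:
  assumes "A0 \<le> A1" "B0 \<le> B1" "1/2 \<le> phi" "0 \<le> F 0" "F 0 \<le> 1"
    and "\<not> (0 < EUD_slope1 (F 0) A1 A0 B1 B0 phi \<and> 0 < EUD_slope0 (F 0) A1 A0 B1 B0 phi)"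
  shows "\<exists>d1 d0. null_equilibrium F t gmu A1 A0 B1 B0 phi 0 d1 d0"
proof -
  obtain d1 d0 where d: "d1 \<in> {0..1}" "d0 \<in> {0..1}" "d1 + d0 = 1"
    and max: "\<forall>e1\<in>{0..1}. \<forall>e0\<in>{0..1}.
      EUD_slope1 (F 0) A1 A0 B1 B0 phi * e1 + EUD_slope0 (F 0) A1 A0 B1 B0 phi * e0
        \<le> EUD_slope1 (F 0) A1 A0 B1 B0 phi * d1 + EUD_slope0 (F 0) A1 A0 B1 B0 phi * d0"
    using linear_max_on_unit_square_at_antidiagonal_corner EUD_slopes_sum_nonneg assms
    by metis
  have "rho phi d1 d0 = 0"
    using d(3) by (simp add: rho_def)
  then have "Uind F t phi gmu d1 d0 r \<le> Uind F t phi gmu d1 d0 0" for r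
    using Uind_rho_zero by (metis order_refl)
  moreover have "EUD F A1 A0 B1 B0 phi 0 e1 e0 \<le> EUD F A1 A0 B1 B0 phi 0 d1 d0"
    if "e1 \<in> {0..1}" "e0 \<in> {0..1}" for e1 e0
    using max that by (subst (1 2) EUD_zero_reward) simp
  ultimately show ?thesis
    using d \<open>rho phi d1 d0 = 0\<close>
    unfolding null_equilibrium_def is_equilibrium_def by blast
qed

lemma EUD_slopes_not_both_pos_degenerate:
  assumes "A1 = A0 \<or> B1 = B0" "A0 \<le> A1" "B0 \<le> B1" "phi \<le> 1" "0 \<le> q" "q \<le> 1"
  shows "\<not> (0 < EUD_slope1 q A1 A0 B1 B0 phi \<and> 0 < EUD_slope0 q A1 A0 B1 B0 phi)"
proof -
  have "0 \<le> (1 - q) * (1 - phi) * (B1 - B0)" "0 \<le> q * (1 - phi) * (A1 - A0)"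
    using assms by (simp_all add: mult_nonneg_nonneg)
  then show ?thesis
    using assms(1) by (auto simp: EUD_slope1_def EUD_slope0_def)
qed

lemma EUD_slopes_not_both_pos_outside:
  fixes A1 A0 B1 B0 phi q :: real
  defines "a \<equiv> A1 - A0" and "b \<equiv> B1 - B0"
  assumes "0 < phi * a + (1 - phi) * b" "0 < (1 - phi) * a + phi * b"
    and "q \<le> (1 - phi) * b / (phi * a + (1 - phi) * b) \<or> phi * b / ((1 - phi) * a + phi * b) \<le> q"
  shows "\<not> (0 < EUD_slope1 q A1 A0 B1 B0 phi \<and> 0 < EUD_slope0 q A1 A0 B1 B0 phi)"
proof -
  have "EUD_slope1 q A1 A0 B1 B0 phi = q * (phi * a + (1 - phi) * b) - (1 - phi) * b"
    "EUD_slope0 q A1 A0 B1 B0 phi = phi * b - q * ((1 - phi) * a + phi * b)"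
    unfolding EUD_slope1_def EUD_slope0_def a_def b_def by (simp_all add: algebra_simps)
  moreover have "q * (phi * a + (1 - phi) * b) \<le> (1 - phi) * b
      \<or> phi * b \<le> q * ((1 - phi) * a + phi * b)"
    using assms(5) by (simp add: assms(3,4) pos_le_divide_eq pos_divide_le_eq)
  ultimately show ?thesis
    by linarith
qed

lemma EUD_slopes_thresholds:
  assumes "A0 \<le> A1" "B0 \<le> B1" "0 < phi" "phi < 1"
  obtains L U where "0 < L" "L < 1" "0 < U" "U < 1"
    "\<And>q. 0 \<le> q \<Longrightarrow> q \<le> 1 \<Longrightarrow> q < L \<or> U < q \<Longrightarrow>
       \<not> (0 < EUD_slope1 q A1 A0 B1 B0 phi \<and> 0 < EUD_slope0 q A1 A0 B1 B0 phi)"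
proof (cases "A1 = A0 \<or> B1 = B0")
  case True
  then show ?thesis
    using that[of "1/2" "1/2"] EUD_slopes_not_both_pos_degenerate assms by simp
next
  case False
  define a b where "a = A1 - A0" and "b = B1 - B0"
  have ab: "0 < a" "0 < b"
    using False assms by (auto simp: a_def b_def)
  define L U where "L = (1 - phi) * b / (phi * a + (1 - phi) * b)"
    and "U = phi * b / ((1 - phi) * a + phi * b)"
  have pos: "0 < phi * a + (1 - phi) * b" "0 < (1 - phi) * a + phi * b"
    using ab assms by (simp_all add: add_pos_pos)
  have "0 < L" "L < 1" "0 < U" "U < 1"
    using ab assms pos by (auto simp: L_def U_def field_simps)
  moreover have "\<not> (0 < EUD_slope1 q A1 A0 B1 B0 phi \<and> 0 < EUD_slope0 q A1 A0 B1 B0 phi)"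
    if "q < L \<or> U < q" for q
    using that pos unfolding L_def U_def a_def b_def
    by (intro EUD_slopes_not_both_pos_outside) auto
  ultimately show ?thesis
    using that by blast
qed

theorem corollary4:
  fixes A1 A0 B1 B0 phi :: real
  assumes "0 \<le> A1" "0 \<le> A0" "0 \<le> B1" "0 \<le> B0"
    and "A1 \<ge> A0" "B1 \<ge> B0"
    and "1/2 < phi" "phi < 1"
  shows "\<exists>L U. 0 < L \<and> L < 1 \<and> 0 < U \<and> U < 1 \<and>
           (\<forall>F f t gmu. admissible_cdf F f \<and> 0 \<le> t \<and> F gmu = 1/2 \<and>
              (F 0 < L \<or> F 0 > U) \<longrightarrow>
              (\<exists>r d1 d0. null_equilibrium F t gmu A1 A0 B1 B0 phi r d1 d0))"
proof -
  obtain L U where LU: "0 < L" "L < 1" "0 < U" "U < 1"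
    and outside: "\<And>q. 0 \<le> q \<Longrightarrow> q \<le> 1 \<Longrightarrow> q < L \<or> U < q \<Longrightarrow>
       \<not> (0 < EUD_slope1 q A1 A0 B1 B0 phi \<and> 0 < EUD_slope0 q A1 A0 B1 B0 phi)"
    using EUD_slopes_thresholds[of A0 A1 B0 B1 phi] assms by auto
  have "\<exists>r d1 d0. null_equilibrium F t gmu A1 A0 B1 B0 phi r d1 d0"
    if "admissible_cdf F f" "F 0 < L \<or> F 0 > U" for F f t gmu
  proof -
    have "0 \<le> F 0" "F 0 \<le> 1"
      using admissible_cdf_range[OF that(1)] by auto
    then have "\<exists>d1 d0. null_equilibrium F t gmu A1 A0 B1 B0 phi 0 d1 d0"
      using null_equilibrium_zero_reward outside that(2) assms by simp
    then show ?thesis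
      by blast
  qed
  with LU show ?thesis
    by blast
qed

end
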